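(* Let $M(n)$ denote the maximum of $\sigma_2(G)$ over all connected graphs $G$ with $n$ vertices. Then $M(n)=\frac{n^4}{32}+O(n^3)$ as $n\to\infty$.
   Context: All graphs are finite, simple, undirected. For a connected graph $G$ and $u\in V(G)$, the eccentricity $\varepsilon_G(u)=\max_{v\in V(G)} d_G(u,v)$, where $d_G$ is the shortest-path distance. The second Zagreb eccentricity index is $\sigma_2(G)=\sum_{uv\in E(G)}\varepsilon_G(u)\varepsilon_G(v)$. *)

theory Defs
  imports Main "HOL-Library.Landau_Symbols"
begin

definition simple_graph :: "nat \<Rightarrow> (nat \<Rightarrow> nat \<Rightarrow> bool) \<Rightarrow> bool" where
  "simple_graph n E \<longleftrightarrow> (\<forall>u v. E u v \<longrightarrow> u < n \<and> v < n \<and> u \<noteq> v \<and> E v u)"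

definition adj_rel :: "(nat \<Rightarrow> nat \<Rightarrow> bool) \<Rightarrow> (nat \<times> nat) set" where
  "adj_rel E = {(u, v). E u v}"

definition connected_graph :: "nat \<Rightarrow> (nat \<Rightarrow> nat \<Rightarrow> bool) \<Rightarrow> bool" where
  "connected_graph n E \<longleftrightarrow> simple_graph n E \<and>
     (\<forall>u v. u < n \<longrightarrow> v < n \<longrightarrow> (u, v) \<in> (adj_rel E)\<^sup>*)"

definition gdist :: "(nat \<Rightarrow> nat \<Rightarrow> bool) \<Rightarrow> nat \<Rightarrow> nat \<Rightarrow> nat" where
  "gdist E u v = (LEAST k. (u, v) \<in> adj_rel E ^^ k)"

definition ecc :: "nat \<Rightarrow> (nat \<Rightarrow> nat \<Rightarrow> bool) \<Rightarrow> nat \<Rightarrow> nat" where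
  "ecc n E u = Max {gdist E u v | v. v < n}"

definition sigma2 :: "nat \<Rightarrow> (nat \<Rightarrow> nat \<Rightarrow> bool) \<Rightarrow> nat" where
  "sigma2 n E = (\<Sum>(u, v) \<in> {(u, v). u < v \<and> v < n \<and> E u v}. ecc n E u * ecc n E v)"

definition M :: "nat \<Rightarrow> nat" where
  "M n = Max {sigma2 n E | E. connected_graph n E}"

end

theory Submission
  imports Defs
begin

text \<open>Upper bound: let D be the diameter and P the vertex set of a geodesic of length D.
  Every eccentricity is at most D, and every vertex has at most three neighbours on P
  (their distances from the start of the geodesic differ by at most one), so at most
  3n edges meet P while the others lie among the n - D - 1 remaining vertices.
  Hence sigma2 \<le> ((n - D - 1)^2/2 + 3n) D^2 \<le> n^4/32 + 3n^3 by AM-GM.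
  Lower bound: a clique on n/2 vertices with a pendant path of n/2 vertices; every clique
  vertex has eccentricity at least n/2.\<close>

lemma gdist_le: "(u, v) \<in> adj_rel E ^^ k \<Longrightarrow> gdist E u v \<le> k"
  unfolding gdist_def by (rule Least_le)

lemma gdist_relpow:
  assumes "connected_graph n E" "u < n" "v < n"
  shows "(u, v) \<in> adj_rel E ^^ gdist E u v"
proof -
  have "(u, v) \<in> (adj_rel E)\<^sup>*" using assms unfolding connected_graph_def by blast
  then obtain k where "(u, v) \<in> adj_rel E ^^ k" using rtrancl_power by blast
  then show ?thesis unfolding gdist_def by (rule LeastI)
qed

lemma gdist_edge_le:
  assumes "connected_graph n E" "a < n" "x < n" "E x y"
  shows "gdist E a y \<le> gdist E a x + 1"
proof -
  have "(a, x) \<in> adj_rel E ^^ gdist E a x" using gdist_relpow assms by blast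
  moreover have "(x, y) \<in> adj_rel E" using assms(4) by (simp add: adj_rel_def)
  ultimately have "(a, y) \<in> adj_rel E ^^ Suc (gdist E a x)" by (rule relpow_Suc_I)
  then show ?thesis using gdist_le by fastforce
qed

lemma gdist_adjacent:
  assumes "connected_graph n E" "a < n" "E x y"
  shows "gdist E a y \<le> gdist E a x + 1" "gdist E a x \<le> gdist E a y + 1"
proof -
  have "x < n" "y < n" "E y x"
    using assms(1,3) unfolding connected_graph_def simple_graph_def by blast+
  then show "gdist E a y \<le> gdist E a x + 1" "gdist E a x \<le> gdist E a y + 1"
    using gdist_edge_le[OF assms(1,2)] assms(3) by blast+
qed

lemma ex_gdist_eq:
  assumes conn: "connected_graph n E" and "a < n" "b < n" "j \<le> gdist E a b"
  shows "\<exists>c<n. gdist E a c = j"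
proof -
  define m where "m = gdist E a b"
  have "(a, b) \<in> adj_rel E ^^ (j + (m - j))"
    using gdist_relpow[OF assms(1-3)] assms(4) m_def by simp
  then obtain c where c1: "(a, c) \<in> adj_rel E ^^ j" and c2: "(c, b) \<in> adj_rel E ^^ (m - j)"
    unfolding relpow_add by blast
  have cn: "c < n"
  proof (cases j)
    case 0
    then show ?thesis using c1 assms(2) by simp
  next
    case (Suc j')
    then obtain z where "(z, c) \<in> adj_rel E" using c1 relpow_Suc_E by metis
    then show ?thesis using conn unfolding connected_graph_def simple_graph_def adj_rel_def by blast
  qed
  have "\<not> gdist E a c < j"
  proof
    assume lt: "gdist E a c < j"
    have "(a, c) \<in> adj_rel E ^^ gdist E a c" using gdist_relpow[OF conn assms(2) cn] .
    with c2 have "(a, b) \<in> adj_rel E ^^ (gdist E a c + (m - j))" unfolding relpow_add by blast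
    then have "m \<le> gdist E a c + (m - j)" using gdist_le m_def by blast
    with lt assms(4) m_def show False by linarith
  qed
  with gdist_le[OF c1] cn show ?thesis by (intro exI[of _ c]) auto
qed

lemma ecc_eq_Max_gdist: "ecc n E u = Max (gdist E u ` {..<n})"
proof -
  have "{gdist E u v | v. v < n} = gdist E u ` {..<n}" by auto
  then show ?thesis unfolding ecc_def by simp
qed

lemma gdist_le_ecc: "v < n \<Longrightarrow> gdist E u v \<le> ecc n E u"
  unfolding ecc_eq_Max_gdist by simp

lemma ex_gdist_eq_diameter:
  assumes "0 < n"
  shows "\<exists>a<n. \<exists>b<n. gdist E a b = Max (ecc n E ` {..<n})"
proof -
  have "Max (ecc n E ` {..<n}) \<in> ecc n E ` {..<n}" using assms by (intro Max_in) auto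
  then obtain a where a: "a < n" "ecc n E a = Max (ecc n E ` {..<n})" by auto
  have "Max (gdist E a ` {..<n}) \<in> gdist E a ` {..<n}" using assms by (intro Max_in) auto
  then obtain b where "b < n" "gdist E a b = ecc n E a" unfolding ecc_eq_Max_gdist by auto
  with a show ?thesis by auto
qed

definition strict_pairs :: "'a::linorder set \<Rightarrow> ('a \<times> 'a) set" where
  "strict_pairs Q = {(u, v). u \<in> Q \<and> v \<in> Q \<and> u < v}"

definition edges :: "nat \<Rightarrow> (nat \<Rightarrow> nat \<Rightarrow> bool) \<Rightarrow> (nat \<times> nat) set" where
  "edges n E = {(u, v). u < v \<and> v < n \<and> E u v}"

lemma sigma2_eq_sum_edges: "sigma2 n E = (\<Sum>(u, v) \<in> edges n E. ecc n E u * ecc n E v)"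
  unfolding sigma2_def edges_def ..

lemma finite_edges: "finite (edges n E)"
  unfolding edges_def by (rule finite_subset[of _ "{..<n} \<times> {..<n}"]) auto

lemma card_strict_pairs:
  fixes Q :: "'a::linorder set"
  assumes "finite Q"
  shows "2 * card (strict_pairs Q) + card Q = card Q * card Q"
proof -
  define A where "A = strict_pairs Q"
  define B where "B = {(u, v). u \<in> Q \<and> v \<in> Q \<and> v < u}"
  define Dg where "Dg = (\<lambda>x. (x, x)) ` Q"
  have QQ: "Q \<times> Q = (A \<union> B) \<union> Dg" unfolding A_def B_def Dg_def strict_pairs_def by auto
  have fin: "finite A" "finite B" "finite Dg" using assms unfolding A_def B_def Dg_def strict_pairs_def
    by (auto intro: finite_subset[of _ "Q \<times> Q"])
  have "B = prod.swap ` A" unfolding A_def B_def strict_pairs_def by auto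
  then have cB: "card B = card A" by (simp add: card_image)
  have cD: "card Dg = card Q" unfolding Dg_def by (simp add: card_image inj_on_def)
  have "card (Q \<times> Q) = card (A \<union> B) + card Dg"
    unfolding QQ by (rule card_Un_disjoint) (use fin in \<open>auto simp: A_def B_def Dg_def strict_pairs_def\<close>)
  also have "card (A \<union> B) = card A + card B"
    by (rule card_Un_disjoint) (use fin in \<open>auto simp: A_def B_def strict_pairs_def\<close>)
  finally show ?thesis using cB cD A_def by (simp add: card_cartesian_product)
qed

lemma card_edges_le:
  assumes sg: "simple_graph n E" and P: "P \<subseteq> {..<n}"
    and nbrs: "\<And>x. x < n \<Longrightarrow> card {q \<in> P. E x q} \<le> c"
  shows "2 * card (edges n E) \<le> (n - card P)^2 + 2 * c * n"
proof -
  have Ex: "E u v \<Longrightarrow> u < n \<and> v < n \<and> E v u" for u v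
    using sg unfolding simple_graph_def by blast
  define Q where "Q = {..<n} - P"
  define S2 where "S2 = {(u, v) \<in> edges n E. u \<in> P \<or> v \<in> P}"
  define W where "W = Sigma {..<n} (\<lambda>x. {q \<in> P. E x q})"
  have finP: "finite P" using P finite_subset by blast
  have finQ: "finite Q" unfolding Q_def by simp
  have cQ: "card Q = n - card P" unfolding Q_def using card_Diff_subset[OF finP P] by simp
  have finS1: "finite (strict_pairs Q)" unfolding strict_pairs_def using finQ
    by (auto intro: finite_subset[of _ "Q \<times> Q"])
  have finS2: "finite S2" unfolding S2_def by (rule finite_subset[OF _ finite_edges]) auto
  define g where "g = (\<lambda>(u, v). if v \<in> P then (u, v) else (v, u))"
  have "inj_on g S2" unfolding g_def S2_def edges_def by (auto simp: inj_on_def split: if_splits)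
  moreover have "g ` S2 \<subseteq> W"
    unfolding g_def W_def S2_def edges_def using Ex by (auto split: if_splits)
  moreover have "finite W" unfolding W_def using finP by auto
  ultimately have "card S2 \<le> card W" by (simp add: card_inj_on_le)
  also have "card W = (\<Sum>x<n. card {q \<in> P. E x q})" unfolding W_def
    by (rule card_SigmaI) (use finP in auto)
  also have "\<dots> \<le> c * n" using sum_mono[of "{..<n}" _ "\<lambda>_. c"] nbrs by (simp add: mult.commute)
  finally have c2: "card S2 \<le> c * n" .
  have "edges n E \<subseteq> strict_pairs Q \<union> S2"
    unfolding edges_def strict_pairs_def S2_def Q_def using Ex by auto
  then have "card (edges n E) \<le> card (strict_pairs Q \<union> S2)"
    using finS1 finS2 by (intro card_mono) auto
  also have "\<dots> \<le> card (strict_pairs Q) + card S2" by (rule card_Un_le)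
  finally show ?thesis using c2 card_strict_pairs[OF finQ] cQ by (simp add: power2_eq_square)
qed

lemma ex_geodesic_vertex_set:
  assumes conn: "connected_graph n E" and ab: "a < n" "b < n"
  shows "\<exists>P \<subseteq> {..<n}. card P = gdist E a b + 1 \<and> (\<forall>x<n. card {q \<in> P. E x q} \<le> 3)"
proof -
  define D where "D = gdist E a b"
  define p where "p j = (SOME c. c < n \<and> gdist E a c = j)" for j
  have p: "p j < n \<and> gdist E a (p j) = j" if "j \<le> D" for j
  proof -
    have "\<exists>c. c < n \<and> gdist E a c = j" using ex_gdist_eq[OF conn ab] that D_def by blast
    then show ?thesis unfolding p_def by (rule someI_ex)
  qed
  define P where "P = p ` {..D}"
  have "inj_on p {..D}" by (rule inj_onI) (metis p atMost_iff)
  then have "card P = D + 1" unfolding P_def by (simp add: card_image)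
  moreover have "P \<subseteq> {..<n}" unfolding P_def using p by auto
  moreover have "card {q \<in> P. E x q} \<le> 3" if "x < n" for x
  proof -
    define d where "d = gdist E a x"
    have "{q \<in> P. E x q} \<subseteq> p ` {d - 1, d, d + 1}"
    proof
      fix q
      assume "q \<in> {q \<in> P. E x q}"
      then obtain j where j: "j \<le> D" "q = p j" "E x q" unfolding P_def by auto
      have "gdist E a q = j" using p j by simp
      with gdist_adjacent[OF conn ab(1) j(3)] have "j \<in> {d - 1, d, d + 1}"
        unfolding d_def by force
      with j show "q \<in> p ` {d - 1, d, d + 1}" by auto
    qed
    then have "card {q \<in> P. E x q} \<le> card (p ` {d - 1, d, d + 1})" by (intro card_mono) auto
    also have "\<dots> \<le> card {d - 1, d, d + 1}" by (rule card_image_le) simp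
    also have "\<dots> \<le> 3" by (simp add: card_insert_if)
    finally show ?thesis .
  qed
  ultimately show ?thesis unfolding D_def by blast
qed

lemma four_mult_le_square_sum: "4 * (T::nat) * D \<le> (T + D)^2"
proof -
  have "int (4 * T * D) \<le> int ((T + D)^2)"
    using zero_le_power2[of "int T - int D"] by (simp add: power2_eq_square algebra_simps)
  then show ?thesis by linarith
qed

lemma diameter_estimate:
  fixes n D :: nat
  assumes "D + 1 \<le> n"
  shows "16 * ((n - (D + 1))^2 + 6 * n) * (D * D) \<le> n^4 + 96 * n^3"
proof -
  define T where "T = n - (D + 1)"
  have "4 * T * D \<le> (T + D)^2" by (rule four_mult_le_square_sum)
  also have "\<dots> \<le> n^2" using assms T_def by (intro power_mono) auto
  finally have "(4 * T * D)^2 \<le> (n^2)^2" by (intro power_mono) auto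
  then have "16 * T^2 * (D * D) \<le> n^4" by (simp add: power2_eq_square power4_eq_xxxx algebra_simps)
  moreover have "D * D \<le> n * n" using assms by (intro mult_le_mono) auto
  then have "96 * n * (D * D) \<le> 96 * n^3" by (simp add: power3_eq_cube)
  moreover have "16 * (T^2 + 6 * n) * (D * D) = 16 * T^2 * (D * D) + 96 * n * (D * D)"
    by (simp add: algebra_simps)
  ultimately show ?thesis unfolding T_def by linarith
qed

lemma sigma2_upper_bound:
  assumes conn: "connected_graph n E"
  shows "32 * sigma2 n E \<le> n^4 + 96 * n^3"
proof (cases "n = 0")
  case True
  then show ?thesis by (simp add: sigma2_def)
next
  case False
  define D where "D = Max (ecc n E ` {..<n})"
  obtain a b where ab: "a < n" "b < n" "gdist E a b = D"
    using ex_gdist_eq_diameter False D_def by blast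
  obtain P where P: "P \<subseteq> {..<n}" "card P = D + 1" "\<forall>x<n. card {q \<in> P. E x q} \<le> 3"
    using ex_geodesic_vertex_set[OF conn ab(1,2)] ab(3) by blast
  have Dn: "D + 1 \<le> n" using card_mono[OF _ P(1)] P(2) by simp
  have edge_count: "2 * card (edges n E) \<le> (n - (D + 1))^2 + 6 * n"
    using card_edges_le[OF _ P(1), of E 3] P conn by (simp add: connected_graph_def)
  have ecc_le: "u < n \<Longrightarrow> ecc n E u \<le> D" for u unfolding D_def by simp
  have "sigma2 n E \<le> card (edges n E) * (D * D)"
    unfolding sigma2_eq_sum_edges
    by (rule sum_bounded_above[where K="D * D", simplified])
       (auto simp: edges_def intro!: mult_mono ecc_le)
  then have "32 * sigma2 n E \<le> 16 * (2 * card (edges n E)) * (D * D)" by simp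
  also have "\<dots> \<le> 16 * ((n - (D + 1))^2 + 6 * n) * (D * D)"
    using edge_count by (intro mult_le_mono) auto
  also have "\<dots> \<le> n^4 + 96 * n^3" by (rule diameter_estimate[OF Dn])
  finally show ?thesis .
qed

lemma relpow_bounded_increment:
  assumes "\<And>x y. (x, y) \<in> R \<Longrightarrow> f y \<le> f x + (1::nat)"
  shows "(x, y) \<in> R ^^ m \<Longrightarrow> f y \<le> f x + m"
proof (induction m arbitrary: y)
  case 0
  then show ?case by simp
next
  case (Suc m)
  then obtain z where "(x, z) \<in> R ^^ m" "(z, y) \<in> R" by (meson relpow_Suc_E)
  then show ?case using Suc.IH assms by fastforce
qed

definition lollipop :: "nat \<Rightarrow> nat \<Rightarrow> nat \<Rightarrow> nat \<Rightarrow> bool" where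
  "lollipop n k u v \<longleftrightarrow> u < n \<and> v < n \<and> u \<noteq> v \<and> (max u v < k \<or> u = v + 1 \<or> v = u + 1)"

lemma connected_lollipop: "connected_graph n (lollipop n k)"
proof -
  have sg: "simple_graph n (lollipop n k)" unfolding simple_graph_def lollipop_def by auto
  have "(0, v) \<in> (adj_rel (lollipop n k))\<^sup>* \<and> (v, 0) \<in> (adj_rel (lollipop n k))\<^sup>*" if "v < n" for v
    using that
  proof (induction v)
    case 0
    then show ?case by simp
  next
    case (Suc v)
    have "(v, Suc v) \<in> adj_rel (lollipop n k)" "(Suc v, v) \<in> adj_rel (lollipop n k)"
      using Suc.prems by (auto simp: adj_rel_def lollipop_def)
    with Suc show ?case
      by (meson Suc_lessD rtrancl.rtrancl_into_rtrancl converse_rtrancl_into_rtrancl)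
  qed
  with sg show ?thesis unfolding connected_graph_def by (meson rtrancl_trans)
qed

lemma ecc_lollipop_ge:
  assumes "u < k" "k \<le> n"
  shows "n - k \<le> ecc n (lollipop n k) u"
proof -
  \<comment> \<open>along an edge, max v (k - 1) grows by at most one, and it equals k - 1 on the clique\<close>
  define f where "f v = max v (k - 1)" for v
  have step: "(x, y) \<in> adj_rel (lollipop n k) \<Longrightarrow> f y \<le> f x + 1" for x y
    unfolding adj_rel_def lollipop_def f_def by auto
  have "(u, n - 1) \<in> adj_rel (lollipop n k) ^^ gdist (lollipop n k) u (n - 1)"
    by (rule gdist_relpow[OF connected_lollipop]) (use assms in auto)
  from relpow_bounded_increment[OF step this]
  have "f (n - 1) \<le> f u + gdist (lollipop n k) u (n - 1)" .
  then have "n - k \<le> gdist (lollipop n k) u (n - 1)" using assms unfolding f_def by auto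
  also have "\<dots> \<le> ecc n (lollipop n k) u" using assms by (intro gdist_le_ecc) auto
  finally show ?thesis .
qed

lemma sigma2_lollipop_ge:
  assumes "k \<le> n"
  shows "(k * k - k) * (n - k)^2 \<le> 2 * sigma2 n (lollipop n k)"
proof -
  let ?K = "strict_pairs {..<k}"
  have "card ?K * (n - k)^2 \<le> (\<Sum>(u, v) \<in> ?K. ecc n (lollipop n k) u * ecc n (lollipop n k) v)"
    by (rule sum_bounded_below[where K="(n - k)^2", simplified])
       (auto simp: strict_pairs_def power2_eq_square intro!: mult_mono ecc_lollipop_ge assms)
  also have "\<dots> \<le> sigma2 n (lollipop n k)" unfolding sigma2_eq_sum_edges
    by (rule sum_mono2[OF finite_edges]) (use assms in \<open>auto simp: strict_pairs_def edges_def lollipop_def\<close>)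
  finally have "2 * card ?K * (n - k)^2 \<le> 2 * sigma2 n (lollipop n k)" by simp
  moreover have "2 * card ?K = k * k - k" using card_strict_pairs[of "{..<k}"] by simp
  ultimately show ?thesis by simp
qed

lemma finite_sigma2_connected: "finite {sigma2 n E | E. connected_graph n E}"
proof -
  have "{sigma2 n E | E. connected_graph n E} \<subseteq> {..n^4 + 96 * n^3}"
    using sigma2_upper_bound by fastforce
  then show ?thesis using finite_subset by blast
qed

lemma sigma2_le_M: "connected_graph n E \<Longrightarrow> sigma2 n E \<le> M n"
  unfolding M_def by (intro Max_ge finite_sigma2_connected) auto

lemma M_upper_bound: "32 * M n \<le> n^4 + 96 * n^3"
proof -
  have "M n \<in> {sigma2 n E | E. connected_graph n E}"
    unfolding M_def using connected_lollipop[of n 0] by (intro Max_in finite_sigma2_connected) blast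
  with sigma2_upper_bound show ?thesis by auto
qed

lemma M_lower_bound:
  assumes "k \<le> n"
  shows "(k * k - k) * (n - k)^2 \<le> 2 * M n"
proof -
  have "sigma2 n (lollipop n k) \<le> M n" by (rule sigma2_le_M[OF connected_lollipop])
  with sigma2_lollipop_ge[OF assms] show ?thesis by linarith
qed

lemma quartic_le_lollipop_estimate:
  fixes K N :: real
  assumes "N - 1 \<le> 2 * K" "2 * K \<le> N" "3 \<le> N"
  shows "N^4 - 4 * N^3 \<le> 16 * ((K * K - K) * (N - K)^2)"
proof -
  have "(N - 1) * (N - 3) \<le> (2 * K) * (2 * K - 2)" using assms by (intro mult_mono) auto
  moreover have "N^2 \<le> (2 * N - 2 * K)^2" using assms by (intro power_mono) auto
  ultimately have "(N - 1) * (N - 3) * N^2 \<le> (2 * K) * (2 * K - 2) * (2 * N - 2 * K)^2"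
    using assms by (intro mult_mono) auto
  moreover have "N^4 - 4 * N^3 \<le> (N - 1) * (N - 3) * N^2"
    by (simp add: power2_eq_square power3_eq_cube power4_eq_xxxx algebra_simps)
  ultimately show ?thesis by (simp add: power2_eq_square algebra_simps)
qed

lemma M_near_quartic:
  assumes "3 \<le> n"
  shows "\<bar>real (M n) - real n ^ 4 / 32\<bar> \<le> 3 * real n ^ 3"
proof -
  define k where "k = n div 2"
  have k: "k \<le> n" "1 \<le> k" "n - 1 \<le> 2 * k" "2 * k \<le> n" using assms unfolding k_def by auto
  have "real ((k * k - k) * (n - k)^2) \<le> real (2 * M n)"
    using M_lower_bound[OF k(1)] by (simp only: of_nat_le_iff)
  then have "(real k * real k - real k) * (real n - real k)^2 \<le> 2 * real (M n)"
    using k by (simp add: of_nat_diff)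
  moreover have "real n ^ 4 - 4 * real n ^ 3 \<le> 16 * ((real k * real k - real k) * (real n - real k)^2)"
    by (rule quartic_le_lollipop_estimate) (use k assms in auto)
  ultimately have "real n ^ 4 - 4 * real n ^ 3 \<le> 32 * real (M n)" by linarith
  moreover have "real (32 * M n) \<le> real (n^4 + 96 * n^3)"
    using M_upper_bound by (simp only: of_nat_le_iff)
  then have "32 * real (M n) \<le> real n ^ 4 + 96 * real n ^ 3" by simp
  ultimately show ?thesis by (simp add: abs_le_iff)
qed

theorem corollary2p12:
  shows "(\<lambda>n. real (M n) - real n ^ 4 / 32) \<in> O(\<lambda>n. real n ^ 3)"
proof (rule bigoI[where c = 3])
  show "\<forall>\<^sub>F n in at_top. norm (real (M n) - real n ^ 4 / 32) \<le> 3 * norm (real n ^ 3)"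
    using eventually_ge_at_top[of "3::nat"] by eventually_elim (simp add: M_near_quartic)
qed

end
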